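(* Let $x\in J$ with $\mathrm{supp}(x)=\mathbb N$, and let $(A_n)$ be a sequence of nonempty finite subsets of $\mathbb N$ converging pointwise (i.e. their indicator functions converge pointwise) to a set $A\subset\mathbb N$. Then $\lim_{n\to\infty}\|x\|_{A_n}=\|x\|_A$.
   Context: For a real sequence $x=(x(n))_{n\in\mathbb N}$ let $\|x\|_J=\sup\bigl(\sum_{i=1}^n|\sum_{k\in I_i}x(k)|^2\bigr)^{1/2}$ over all $n$ and all families of pairwise disjoint intervals $I_1,\dots,I_n$ of $\mathbb N$ (intervals: nonempty sets of consecutive positive integers). $J=\{x:\|x\|_J<\infty\}$; for $x\in J$ and any interval $I$ (finite or infinite) the series $\sum_{k\in I}x(k)$ converges. $\mathrm{supp}(x)=\{n:x(n)\ne0\}$. For $A\subset\mathbb N$, with $m_0=0$, the partition $\mathcal P_A$ of $\mathbb N$ into intervals is: $\{\mathbb N\}$ if $A=\emptyset$; $\{(m_{i-1},m_i]\}_{i=1}^k\cup\{(m_k,\infty)\}$ if $A=\{m_1<\dots<m_k\}$; $\{(m_{i-1},m_i]\}_{i\in\mathbb N}$ if $A=\{m_1<m_2<\cdots\}$ is infinite (intervals taken in $\mathbb N$). For $x\in J$, $\|x\|_A=\bigl(\sum_{I\in\mathcal P_A}|\sum_{k\in I}x(k)|^2\bigr)^{1/2}$. *)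

theory Defs
  imports Complex_Main "HOL-Library.Infinite_Set" "HOL-Library.Indicator_Function"
begin

text \<open>Sequences are functions nat => real; the index set of the paper (positive integers)
  is {1..}; the value at 0 is never used by any definition below.
  Intervals {a..b} with 1 <= a <= b are encoded as pairs (a,b).\<close>

definition J_values :: "(nat \<Rightarrow> real) \<Rightarrow> real set" where
  "J_values x = {\<Sum>p\<in>F. (\<Sum>k=fst p..snd p. x k)^2 | F.
      finite F \<and> (\<forall>p\<in>F. 1 \<le> fst p \<and> fst p \<le> snd p) \<and>
      (\<forall>p\<in>F. \<forall>q\<in>F. p \<noteq> q \<longrightarrow> {fst p..snd p} \<inter> {fst q..snd q} = {})}"

definition in_J :: "(nat \<Rightarrow> real) \<Rightarrow> bool" where
  "in_J x \<longleftrightarrow> bdd_above (J_values x)"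

definition normJ :: "(nat \<Rightarrow> real) \<Rightarrow> real" where
  "normJ x = sqrt (Sup (J_values x))"

text \<open>Endpoints m_0 = 0, m_1 < m_2 < ... of an infinite set A.\<close>
definition pt :: "nat set \<Rightarrow> nat \<Rightarrow> nat" where
  "pt A i = (if i = 0 then 0 else enumerate A (i - 1))"

text \<open>For finite A = {m_1<...<m_k}
  the intervals are (m_{i-1},m_i] plus the tail (m_k,\<infinity>), whose sum is the series
  x(m_k+1) + x(m_k+2) + ...; for A = {} this is the single interval N.\<close>
definition normA :: "(nat \<Rightarrow> real) \<Rightarrow> nat set \<Rightarrow> real" where
  "normA x A = sqrt (if finite A then
      (let m = 0 # sorted_list_of_set A in
        (\<Sum>i<length m - 1. (\<Sum>k\<in>{m!i<..m!(Suc i)}. x k)^2) + (\<Sum>k. x (k + last m + 1))^2)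
    else (\<Sum>i. (\<Sum>k\<in>{pt A i<..pt A (Suc i)}. x k)^2))"

end

theory Submission
  imports Defs
begin

(* Let s(n) = x(1) + ... + x(n). The intervals between consecutive points of a chain
   p_0 < p_1 < ... < p_r show that the J-norm bounds its variation
   sum_j (s(p_(j+1)) - s(p_j))^2. A chain of nearly maximal variation leaves room for less
   than eps beyond its last point, so chains starting late have uniformly small variation;
   in particular s converges to some L. Now ||x||_B^2 is the sum of the squared jumps of
   0, s(m_1), s(m_2), ... (followed by L when B = {m_1 < m_2 < ...} is finite), and the tail
   of this series from index N+1 on is the variation of a chain starting beyond N, or a limit
   of such, uniformly in B. Pointwise convergence of A_n to A makes each jump converge: the
   first points of A_n eventually coincide with those of A, and points of A_n of higher index
   than A has escape to infinity, where s is close to L. Interchanging limit and sum gives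
   the claim. *)

lemma nonneg_suminf_head_bounds:
  fixes h :: "nat \<Rightarrow> real"
  assumes nonneg: "\<And>i. 0 \<le> h i" and tail: "\<And>R. (\<Sum>i\<in>{I..<R}. h i) \<le> e"
  shows "(\<Sum>i<I. h i) \<le> suminf h" "suminf h \<le> (\<Sum>i<I. h i) + e"
proof -
  have partial: "(\<Sum>i<R. h i) \<le> (\<Sum>i<I. h i) + e" for R
  proof (cases "R \<le> I")
    case True
    then have "(\<Sum>i<R. h i) \<le> (\<Sum>i<I. h i)" using nonneg by (intro sum_mono2) auto
    then show ?thesis using tail[of 0] by simp
  next
    case False
    then have "(\<Sum>i<R. h i) = (\<Sum>i<I. h i) + (\<Sum>i\<in>{I..<R}. h i)"
      by (simp add: lessThan_atLeast0 sum.atLeastLessThan_concat)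
    then show ?thesis using tail[of R] by simp
  qed
  have "summable h" using nonneg partial by (intro summableI_nonneg_bounded)
  then show "(\<Sum>i<I. h i) \<le> suminf h" "suminf h \<le> (\<Sum>i<I. h i) + e"
    using nonneg partial by (auto intro: sum_le_suminf suminf_le_const)
qed

(* Unlike tannerys_theorem, this assumes uniformly small tails instead of a summable majorant. *)
lemma tendsto_suminf_uniform_tail:
  fixes f :: "nat \<Rightarrow> nat \<Rightarrow> real"
  assumes nonneg: "\<And>n i. 0 \<le> f n i"
    and lim: "\<And>i. (\<lambda>n. f n i) \<longlonglongrightarrow> g i"
    and tail: "\<And>e. e > 0 \<Longrightarrow> \<exists>I. \<forall>n R. (\<Sum>i\<in>{I..<R}. f n i) \<le> e"
  shows "(\<lambda>n. suminf (f n)) \<longlonglongrightarrow> suminf g"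
proof (rule LIMSEQ_I)
  fix r :: real assume r: "r > 0"
  then obtain I where I: "\<And>n R. (\<Sum>i\<in>{I..<R}. f n i) \<le> r/3" using tail[of "r/3"] by auto
  have g_nonneg: "0 \<le> g i" for i
    by (rule LIMSEQ_le_const[OF lim]) (use nonneg in auto)
  have g_tail: "(\<Sum>i\<in>{I..<R}. g i) \<le> r/3" for R
    by (rule LIMSEQ_le_const2[OF tendsto_sum[OF lim]]) (use I in auto)
  have "(\<lambda>n. \<Sum>i<I. f n i) \<longlonglongrightarrow> (\<Sum>i<I. g i)" by (intro tendsto_sum lim)
  then obtain n0 where n0: "\<And>n. n \<ge> n0 \<Longrightarrow> \<bar>(\<Sum>i<I. f n i) - (\<Sum>i<I. g i)\<bar> < r/3"
    using r by (metis LIMSEQ_D divide_pos_pos real_norm_def zero_less_numeral)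
  have "\<bar>suminf (f n) - suminf g\<bar> < r" if "n \<ge> n0" for n
    using n0[OF that] nonneg_suminf_head_bounds[of "f n", OF nonneg I]
      nonneg_suminf_head_bounds[of g, OF g_nonneg g_tail] by linarith
  then show "\<exists>n0. \<forall>n\<ge>n0. norm (suminf (f n) - suminf g) < r" by auto
qed

definition has_nth :: "nat set \<Rightarrow> nat \<Rightarrow> bool" where
  "has_nth B i \<longleftrightarrow> infinite B \<or> i < card B"

lemma has_nth_enumerate_in: "has_nth B i \<Longrightarrow> enumerate B i \<in> B"
  by (cases "finite B") (auto simp: has_nth_def enumerate_in_set finite_enumerate_in_set)

lemma has_nth_enumerate_less:
  "has_nth B j \<Longrightarrow> i < j \<Longrightarrow> has_nth B i \<and> enumerate B i < enumerate B j"
  by (cases "finite B") (auto simp: has_nth_def enumerate_mono finite_enumerate_mono)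

lemma has_nth_le_enumerate: "has_nth B i \<Longrightarrow> i \<le> enumerate B i"
  by (cases "finite B") (auto simp: has_nth_def le_enumerate finite_le_enumerate)

lemma enumerate_surj: "k \<in> B \<Longrightarrow> \<exists>j. has_nth B j \<and> enumerate B j = k"
  unfolding has_nth_def by (metis enumerate_Ex finite_enumerate_Ex)

lemma card_less_enumerate:
  assumes "has_nth B i"
  shows "card {k\<in>B. k < enumerate B i} = i"
proof -
  have "{k\<in>B. k < enumerate B i} = enumerate B ` {..<i}"
  proof
    show "{k\<in>B. k < enumerate B i} \<subseteq> enumerate B ` {..<i}"
    proof
      fix k assume k: "k \<in> {k\<in>B. k < enumerate B i}"
      then obtain j where j: "has_nth B j" "enumerate B j = k" using enumerate_surj by blast
      then have "j < i"
        using k has_nth_enumerate_less[OF j(1), of i] by (cases i j rule: linorder_cases) auto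
      then show "k \<in> enumerate B ` {..<i}" using j by auto
    qed
    show "enumerate B ` {..<i} \<subseteq> {k\<in>B. k < enumerate B i}"
      using has_nth_enumerate_less[OF assms] has_nth_enumerate_in by auto
  qed
  moreover have "inj_on (enumerate B) {..<i}"
    using has_nth_enumerate_less assms
    by (intro linorder_inj_onI') (metis lessThan_iff order_less_irrefl)
  ultimately show ?thesis by (simp add: card_image)
qed

lemma enumerate_eq_if_initial_agree:
  assumes agree: "B \<inter> {..N} = C \<inter> {..N}" and C: "has_nth C i" "enumerate C i \<le> N"
  shows "has_nth B i \<and> enumerate B i = enumerate C i"
proof -
  let ?e = "enumerate C i"
  have same: "k \<in> B \<longleftrightarrow> k \<in> C" if "k \<le> N" for k
    using agree that by blast
  have "?e \<in> B" using has_nth_enumerate_in[OF C(1)] same C(2) by blast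
  then obtain j where j: "has_nth B j" "enumerate B j = ?e" using enumerate_surj by blast
  have "{k\<in>B. k < ?e} = {k\<in>C. k < ?e}" using same C(2) by auto
  then have "j = i" using card_less_enumerate[OF j(1)] card_less_enumerate[OF C(1)] j(2) by simp
  then show ?thesis using j by simp
qed

lemma sorted_list_of_set_eq_map_enumerate:
  assumes "finite B"
  shows "sorted_list_of_set B = map (enumerate B) [0..<card B]"
proof (rule strict_sorted_equal)
  show "sorted_wrt (<) (map (enumerate B) [0..<card B])"
    unfolding sorted_wrt_iff_nth_less by (simp add: assms finite_enumerate_mono)
  show "set (sorted_list_of_set B) = set (map (enumerate B) [0..<card B])"
    using bij_betw_imp_surj_on[OF finite_bij_enumerate[OF assms]] assms
    by (simp add: atLeast0LessThan)
qed simp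

lemma eventually_initial_segments_agree:
  fixes As :: "nat \<Rightarrow> nat set"
  assumes "\<And>k. (\<lambda>n. indicator (As n) k :: real) \<longlonglongrightarrow> indicator A k"
  shows "eventually (\<lambda>n. As n \<inter> {..N} = A \<inter> {..N}) sequentially"
proof -
  have "eventually (\<lambda>n. k \<in> As n \<longleftrightarrow> k \<in> A) sequentially" for k
  proof -
    have "eventually (\<lambda>n. dist (indicator (As n) k :: real) (indicator A k) < 1) sequentially"
      using assms by (rule tendstoD) simp
    then show ?thesis by eventually_elim (auto simp: indicator_def dist_real_def split: if_splits)
  qed
  then have "eventually (\<lambda>n. \<forall>k\<in>{..N}. k \<in> As n \<longleftrightarrow> k \<in> A) sequentially"
    by (intro eventually_ball_finite) auto
  then show ?thesis by eventually_elim auto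
qed

definition psum :: "(nat \<Rightarrow> real) \<Rightarrow> nat \<Rightarrow> real" where
  "psum x n = (\<Sum>k=1..n. x k)"

lemma psum_0 [simp]: "psum x 0 = 0"
  by (simp add: psum_def)

lemma sum_greaterThanAtMost_eq_psum_diff:
  assumes "a \<le> b"
  shows "(\<Sum>k\<in>{a<..b}. x k) = psum x b - psum x a"
proof -
  have "{1..b} = {1..a} \<union> {a<..b}" using assms by auto
  then have "psum x b = psum x a + (\<Sum>k\<in>{a<..b}. x k)"
    unfolding psum_def by (simp add: sum.union_disjoint ivl_disj_int)
  then show ?thesis by simp
qed

definition increasing_chain :: "(nat \<Rightarrow> nat) \<Rightarrow> nat \<Rightarrow> bool" where
  "increasing_chain p r \<longleftrightarrow> (\<forall>j<r. p j < p (Suc j))"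

definition variation :: "(nat \<Rightarrow> real) \<Rightarrow> (nat \<Rightarrow> nat) \<Rightarrow> nat \<Rightarrow> real" where
  "variation x p r = (\<Sum>j<r. (psum x (p (Suc j)) - psum x (p j))^2)"

lemma increasing_chain_less:
  assumes "increasing_chain p r" "i < j" "j \<le> r"
  shows "p i < p j"
  using assms(2,3)
proof (induction j)
  case (Suc j)
  then show ?case
    using assms(1) unfolding increasing_chain_def
    by (cases "i = j") (auto intro: less_trans)
qed simp

lemma variation_in_J_values:
  assumes chain: "increasing_chain p r"
  shows "variation x p r \<in> J_values x"
proof -
  define I where "I j = (Suc (p j), p (Suc j))" for j
  have I_nonempty: "fst (I j) \<le> snd (I j)" if "j < r" for j
    using chain that by (simp add: I_def increasing_chain_def Suc_leI)
  have I_before: "snd (I i) < fst (I j)" if "i < j" "j < r" for i j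
    using increasing_chain_less[OF chain, of "Suc i" j] that
    by (cases "Suc i = j") (auto simp: I_def)
  have inj: "inj_on I {..<r}"
  proof (rule linorder_inj_onI')
    fix i j assume "i \<in> {..<r}" "j \<in> {..<r}" "i < j"
    then show "I i \<noteq> I j" using I_before I_nonempty by (metis lessThan_iff leD order.strict_trans)
  qed
  have disjoint: "{fst a..snd a} \<inter> {fst b..snd b} = {}"
    if ab: "a \<in> I ` {..<r}" "b \<in> I ` {..<r}" "a \<noteq> b" for a b
  proof -
    obtain i j where ij: "i < r" "j < r" "a = I i" "b = I j" using ab(1,2) by blast
    then have "i < j \<or> j < i" using ab(3) by (metis linorder_neqE_nat)
    then show ?thesis using I_before ij by fastforce
  qed
  have "variation x p r = (\<Sum>q\<in>I ` {..<r}. (\<Sum>k=fst q..snd q. x k)^2)"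
    unfolding variation_def sum.reindex[OF inj]
    using chain by (intro sum.cong) (auto simp: I_def increasing_chain_def less_imp_le
        atLeastSucAtMost_greaterThanAtMost sum_greaterThanAtMost_eq_psum_diff)
  moreover have "\<forall>q\<in>I ` {..<r}. 1 \<le> fst q \<and> fst q \<le> snd q"
    using I_nonempty by (auto simp: I_def)
  ultimately show ?thesis
    unfolding J_values_def using disjoint by blast
qed

lemma increasing_chain_glue:
  assumes "increasing_chain p r" "increasing_chain q s" "p r < q 0"
  shows "increasing_chain (\<lambda>j. if j \<le> r then p j else q (j - Suc r)) (r + Suc s)"
  unfolding increasing_chain_def
proof (intro allI impI)
  let ?c = "\<lambda>j. if j \<le> r then p j else q (j - Suc r)"
  fix j assume j: "j < r + Suc s"
  consider "j < r" | "j = r" | "r < j" by linarith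
  then show "?c j < ?c (Suc j)"
  proof cases
    case 3
    then have "j - Suc r < s" "Suc j - Suc r = Suc (j - Suc r)" using j by simp_all
    then show ?thesis using 3 assms(2) by (simp add: increasing_chain_def)
  qed (use assms in \<open>auto simp: increasing_chain_def\<close>)
qed

lemma variation_glue:
  "variation x (\<lambda>j. if j \<le> r then p j else q (j - Suc r)) (r + Suc s)
     = variation x p r + (psum x (q 0) - psum x (p r))^2 + variation x q s"
proof (induction s)
  case 0
  have "variation x (\<lambda>j. if j \<le> r then p j else q (j - Suc r)) r = variation x p r"
    unfolding variation_def by (intro sum.cong) auto
  then show ?case by (simp add: variation_def)
next
  case (Suc s)
  then show ?case by (simp add: variation_def Suc_diff_le)
qed

lemma variation_tail_small:
  assumes "in_J x" "eps > 0"
  obtains N where "\<And>p r. increasing_chain p r \<Longrightarrow> N \<le> p 0 \<Longrightarrow> variation x p r \<le> eps"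
proof -
  define V where "V = {variation x p r | p r. increasing_chain p r}"
  have "V \<subseteq> J_values x" using variation_in_J_values unfolding V_def by blast
  then have bdd: "bdd_above V" using assms(1) unfolding in_J_def by (rule bdd_above_mono[rotated])
  have "variation x id 0 \<in> V" unfolding V_def increasing_chain_def by blast
  moreover have "Sup V - eps < Sup V" using assms(2) by simp
  ultimately obtain v where "v \<in> V" "Sup V - eps < v" using less_cSupE by blast
  then obtain p r where pr: "increasing_chain p r" "Sup V - eps < variation x p r"
    unfolding V_def by blast
  show thesis
  proof (rule that[of "Suc (p r)"])
    fix q s assume q: "increasing_chain q s" "Suc (p r) \<le> q 0"
    let ?glued = "\<lambda>j. if j \<le> r then p j else q (j - Suc r)"
    have "increasing_chain ?glued (r + Suc s)"
      using increasing_chain_glue[OF pr(1) q(1)] q(2) by simp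
    then have "variation x ?glued (r + Suc s) \<le> Sup V"
      using bdd unfolding V_def by (blast intro: cSup_upper)
    moreover have "0 \<le> (psum x (q 0) - psum x (p r))^2" by simp
    ultimately show "variation x q s \<le> eps"
      using pr(2) unfolding variation_glue by linarith
  qed
qed

lemma convergent_psum:
  assumes "in_J x"
  shows "convergent (psum x)"
proof -
  have "Cauchy (psum x)"
  proof (rule metric_CauchyI)
    fix e :: real assume e: "e > 0"
    obtain N where N: "\<And>p r. increasing_chain p r \<Longrightarrow> N \<le> p 0 \<Longrightarrow> variation x p r \<le> (e/2)^2"
      using variation_tail_small[OF assms, of "(e/2)^2"] e by auto
    have close: "\<bar>psum x n - psum x m\<bar> \<le> e/2" if "N \<le> m" "m < n" for m n
    proof -
      have "increasing_chain (\<lambda>j. if j = 0 then m else n) 1"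
        using that by (simp add: increasing_chain_def)
      then have "(psum x n - psum x m)^2 \<le> (e/2)^2"
        using N[of "\<lambda>j. if j = 0 then m else n" 1] that by (simp add: variation_def)
      then have "\<bar>psum x n - psum x m\<bar> \<le> \<bar>e/2\<bar>" by (simp only: abs_le_square_iff)
      then show ?thesis using e by simp
    qed
    show "\<exists>M. \<forall>m\<ge>M. \<forall>n\<ge>M. dist (psum x m) (psum x n) < e"
    proof (intro exI allI impI)
      fix m n assume "N \<le> m" "N \<le> n"
      then have "\<bar>psum x m - psum x n\<bar> \<le> e/2"
        using close[of m n] close[of n m] e
        by (cases m n rule: linorder_cases) (simp_all add: abs_minus_commute)
      then show "dist (psum x m) (psum x n) < e" using e by (simp add: dist_real_def)
    qed
  qed
  then show ?thesis by (simp add: Cauchy_convergent_iff)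
qed

lemma variation_with_limit_le:
  assumes small: "\<And>p r. increasing_chain p r \<Longrightarrow> N \<le> p 0 \<Longrightarrow> variation x p r \<le> eps"
    and L: "psum x \<longlonglongrightarrow> L"
    and p: "increasing_chain p r" "N \<le> p 0"
  shows "variation x p r + (L - psum x (p r))^2 \<le> eps"
proof (rule LIMSEQ_le_const2)
  show "(\<lambda>M. variation x p r + (psum x (M + Suc (p r)) - psum x (p r))^2)
      \<longlonglongrightarrow> variation x p r + (L - psum x (p r))^2"
    by (intro tendsto_intros LIMSEQ_ignore_initial_segment L)
  show "\<exists>M0. \<forall>M\<ge>M0. variation x p r + (psum x (M + Suc (p r)) - psum x (p r))^2 \<le> eps"
  proof (intro exI allI impI)
    fix M
    let ?q = "\<lambda>_. M + Suc (p r)"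
    have "increasing_chain (\<lambda>j. if j \<le> r then p j else ?q (j - Suc r)) (r + Suc 0)"
      using increasing_chain_glue[OF p(1), of ?q 0] by (simp add: increasing_chain_def)
    then have "variation x (\<lambda>j. if j \<le> r then p j else ?q (j - Suc r)) (r + Suc 0) \<le> eps"
      using small p(2) by simp
    then show "variation x p r + (psum x (M + Suc (p r)) - psum x (p r))^2 \<le> eps"
      unfolding variation_glue by (simp add: variation_def)
  qed
qed

(* cut_value x L B i is s(m_i) for the endpoints m_0 = 0 < m_1 < m_2 < ... of the partition
   P_B, and L once B has fewer than i points. *)
fun cut_value :: "(nat \<Rightarrow> real) \<Rightarrow> real \<Rightarrow> nat set \<Rightarrow> nat \<Rightarrow> real" where
  "cut_value x L B 0 = 0"
| "cut_value x L B (Suc i) = (if has_nth B i then psum x (enumerate B i) else L)"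

definition jump :: "(nat \<Rightarrow> real) \<Rightarrow> real \<Rightarrow> nat set \<Rightarrow> nat \<Rightarrow> real" where
  "jump x L B i = (cut_value x L B (Suc i) - cut_value x L B i)^2"

lemma jump_nonneg: "0 \<le> jump x L B i"
  by (simp add: jump_def)

lemma tail_sums_psum:
  assumes "psum x \<longlonglongrightarrow> L"
  shows "(\<lambda>k. x (k + a + 1)) sums (L - psum x a)"
proof -
  have psum: "psum x n = (\<Sum>k<n. x (Suc k))" for n
    unfolding psum_def using sum.atLeast1_atMost_eq[of x n] by simp
  have "(\<lambda>k. x (Suc k)) sums L"
    using assms unfolding sums_def psum[abs_def] .
  then show ?thesis
    using sums_iff_shift[of "\<lambda>k. x (Suc k)" a "L - psum x a"] by (simp add: psum)
qed

lemma normA_eq_sqrt_suminf_jump: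
  assumes L: "psum x \<longlonglongrightarrow> L"
  shows "normA x B = sqrt (\<Sum>i. jump x L B i)"
proof (cases "finite B")
  case False
  have "cut_value x L B i = psum x (pt B i)" for i
    using False by (cases i) (auto simp: pt_def has_nth_def)
  moreover have "pt B i \<le> pt B (Suc i)" for i
    using False by (cases i) (auto simp: pt_def)
  ultimately have "(\<Sum>k\<in>{pt B i<..pt B (Suc i)}. x k)^2 = jump x L B i" for i
    by (simp add: jump_def sum_greaterThanAtMost_eq_psum_diff del: cut_value.simps)
  then show ?thesis using False by (simp add: normA_def)
next
  case True
  define c where "c = card B"
  define m where "m = 0 # sorted_list_of_set B"
  have m: "m = 0 # map (enumerate B) [0..<c]"
    unfolding m_def c_def using sorted_list_of_set_eq_map_enumerate[OF True] by simp
  have cut_m: "cut_value x L B i = psum x (m ! i)" if "i \<le> c" for i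
    using that True by (cases i) (auto simp: m has_nth_def c_def)
  have m_mono: "m ! i \<le> m ! Suc i" if "i < c" for i
    using that True by (cases i) (auto simp: m c_def finite_enumerate_step less_imp_le)
  have "(\<Sum>k\<in>{m!i<..m!(Suc i)}. x k)^2 = jump x L B i" if "i < c" for i
    using that m_mono[OF that] cut_m[of i] cut_m[of "Suc i"]
    by (simp add: jump_def sum_greaterThanAtMost_eq_psum_diff)
  then have chain_part: "(\<Sum>i<length m - 1. (\<Sum>k\<in>{m!i<..m!(Suc i)}. x k)^2) = (\<Sum>i<c. jump x L B i)"
    by (simp add: m)
  have "(\<Sum>k. x (k + last m + 1)) = L - psum x (m ! c)"
    using tail_sums_psum[OF L, of "last m"] by (simp add: sums_iff m last_conv_nth)
  also have "(L - psum x (m ! c))^2 = jump x L B c"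
    using cut_m[of c] True by (simp add: jump_def has_nth_def c_def)
  finally have tail_part: "(\<Sum>k. x (k + last m + 1))^2 = jump x L B c" by simp
  have "jump x L B i = 0" if "c < i" for i
    using that True by (cases i) (auto simp: jump_def has_nth_def c_def)
  then have "(\<Sum>i. jump x L B i) = (\<Sum>i<Suc c. jump x L B i)"
    by (intro suminf_finite) auto
  then show ?thesis
    using True chain_part tail_part by (simp add: normA_def Let_def flip: m_def)
qed

lemma jump_tail_le:
  assumes small: "\<And>p r. increasing_chain p r \<Longrightarrow> N \<le> p 0 \<Longrightarrow> variation x p r \<le> eps"
    and L: "psum x \<longlonglongrightarrow> L"
  shows "(\<Sum>i\<in>{Suc N..<R}. jump x L B i) \<le> eps"
proof -
  have eps: "0 \<le> eps"
    using small[of "\<lambda>_. N" 0] by (simp add: increasing_chain_def variation_def)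
  define p where "p j = enumerate B (j + N)" for j
  define v where "v j = cut_value x L B (Suc (j + N))" for j
  have v: "v j = (if has_nth B (j + N) then psum x (p j) else L)" for j
    by (simp add: v_def p_def)
  have has_below: "has_nth B (j + N)" if "has_nth B (r + N)" "j \<le> r" for j r
    using has_nth_enumerate_less[OF that(1), of "j + N"] that by (cases "j = r") auto
  have chain: "increasing_chain p r" if hr: "has_nth B (r + N)" for r
  proof -
    have "p j < p (Suc j)" if "j < r" for j
      using has_nth_enumerate_less[OF has_below[OF hr, of "Suc j"], of "j + N"] that
      by (simp add: p_def)
    then show ?thesis unfolding increasing_chain_def by blast
  qed
  have start: "N \<le> p 0" if "has_nth B (r + N)" for r
    using has_nth_le_enumerate[OF has_below[OF that, of 0]] by (simp add: p_def)
  show ?thesis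
  proof (cases "Suc N \<le> R")
    case False
    then show ?thesis using eps by simp
  next
    case True
    then obtain r where R: "R = r + Suc N" using le_Suc_ex by (metis add.commute)
    have "(\<Sum>i\<in>{Suc N..<R}. jump x L B i) = (\<Sum>j<r. (v (Suc j) - v j)^2)"
      using sum.shift_bounds_nat_ivl[of "jump x L B" 0 "Suc N" r]
      by (simp add: R jump_def v_def atLeast0LessThan)
    also have "\<dots> \<le> eps"
    proof (cases "has_nth B (r + N)")
      case True
      have "v j = psum x (p j)" if "j \<le> r" for j
        using has_below[OF True that] by (simp add: v)
      then have "(\<Sum>j<r. (v (Suc j) - v j)^2) = variation x p r"
        unfolding variation_def by (intro sum.cong) auto
      then show ?thesis using small chain start True by simp
    next
      case False
      then have has: "has_nth B i \<longleftrightarrow> i < card B" and "card B \<le> r + N" for i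
        by (auto simp: has_nth_def)
      show ?thesis
      proof (cases "card B \<le> N")
        case True
        then show ?thesis using eps by (simp add: v has)
      next
        case False
        define k where "k = card B - Suc N"
        have k: "card B = Suc (k + N)" "k < r"
          using False \<open>card B \<le> r + N\<close> by (simp_all add: k_def)
        have "(\<Sum>j<r. (v (Suc j) - v j)^2) = (\<Sum>j<Suc k. (v (Suc j) - v j)^2)"
          using k by (intro sum.mono_neutral_right) (auto simp: v has)
        also have "\<dots> = variation x p k + (L - psum x (p k))^2"
          using k by (simp add: variation_def v has)
        also have "\<dots> \<le> eps"
          using k by (intro variation_with_limit_le[OF small L chain[of k] start[of k]]) (simp_all add: has)
        finally show ?thesis .
      qed
    qed
    finally show ?thesis .
  qed
qed

lemma cut_value_tendsto:
  assumes L: "psum x \<longlonglongrightarrow> L"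
    and agree: "\<And>N. eventually (\<lambda>n. As n \<inter> {..N} = A \<inter> {..N}) sequentially"
  shows "(\<lambda>n. cut_value x L (As n) i) \<longlonglongrightarrow> cut_value x L A i"
proof (cases i)
  case 0
  then show ?thesis by simp
next
  case (Suc j)
  show ?thesis
  proof (cases "has_nth A j")
    case True
    have "eventually (\<lambda>n. cut_value x L (As n) i = cut_value x L A i) sequentially"
      using agree[of "enumerate A j"]
    proof eventually_elim
      case (elim n)
      then have "has_nth (As n) j \<and> enumerate (As n) j = enumerate A j"
        using enumerate_eq_if_initial_agree[OF elim True order_refl] by blast
      then show ?case using True Suc by simp
    qed
    then show ?thesis by (rule tendsto_eventually)
  next
    case False
    have "(\<lambda>n. cut_value x L (As n) i) \<longlonglongrightarrow> L"
    proof (rule tendstoI)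
      fix e :: real assume "e > 0"
      then obtain M where M: "\<And>m. M \<le> m \<Longrightarrow> dist (psum x m) L < e"
        using L by (meson LIMSEQ_iff_nz dist_real_def)
      show "eventually (\<lambda>n. dist (cut_value x L (As n) i) L < e) sequentially"
        using agree[of M]
      proof eventually_elim
        case (elim n)
        have "M < enumerate (As n) j" if "has_nth (As n) j"
          using enumerate_eq_if_initial_agree[OF elim[symmetric] that] False by fastforce
        then show ?case using M \<open>e > 0\<close> Suc by auto
      qed
    qed
    then show ?thesis using False Suc by simp
  qed
qed

theorem proposition3p2:
  fixes x :: "nat \<Rightarrow> real" and As :: "nat \<Rightarrow> nat set" and A :: "nat set"
  assumes "in_J x"
    and "\<forall>k\<ge>1. x k \<noteq> 0"
    and "\<forall>n. As n \<noteq> {} \<and> finite (As n) \<and> As n \<subseteq> {1..}"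
    and "A \<subseteq> {1..}"
    and "\<forall>k. (\<lambda>n. indicator (As n) (k::nat) :: real) \<longlonglongrightarrow> indicator A k"
  shows "(\<lambda>n. normA x (As n)) \<longlonglongrightarrow> normA x A"
proof -
  obtain L where L: "psum x \<longlonglongrightarrow> L"
    using convergent_psum[OF assms(1)] unfolding convergent_def by blast
  have agree: "eventually (\<lambda>n. As n \<inter> {..N} = A \<inter> {..N}) sequentially" for N
    using assms(5) by (intro eventually_initial_segments_agree) blast
  have "(\<lambda>n. \<Sum>i. jump x L (As n) i) \<longlonglongrightarrow> (\<Sum>i. jump x L A i)"
  proof (rule tendsto_suminf_uniform_tail)
    show "(\<lambda>n. jump x L (As n) i) \<longlonglongrightarrow> jump x L A i" for i
      unfolding jump_def by (intro tendsto_intros cut_value_tendsto[OF L agree])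
    show "\<exists>I. \<forall>n R. (\<Sum>i\<in>{I..<R}. jump x L (As n) i) \<le> e" if e: "e > 0" for e
    proof -
      obtain N where "\<And>p r. increasing_chain p r \<Longrightarrow> N \<le> p 0 \<Longrightarrow> variation x p r \<le> e"
        using variation_tail_small[OF assms(1) e] by blast
      then show ?thesis using jump_tail_le[OF _ L] by blast
    qed
  qed (rule jump_nonneg)
  then show ?thesis
    unfolding normA_eq_sqrt_suminf_jump[OF L] by (rule tendsto_real_sqrt)
qed

end
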